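(* For $r\in(0,\infty)$ let $F_r$ be the distribution function of the Student $t$ density $$f_r(x)=\frac{\Gamma((r+1)/2)}{\sqrt{\pi r}\,\Gamma(r/2)}\Big(1+\frac{x^2}{r}\Big)^{-(r+1)/2},\quad x\in\mathbb{R}.$$ Then $F_r^{-1/r}$ and $(1-F_r)^{-1/r}$ are convex on $\mathbb{R}$ (i.e. $F_r$ is bi-$s^*$-concave with $s=-1/(1+r)$, $s^*=-1/r$), and $$\gamma(F_r)=\sup_{x\in\mathbb{R}}F_r(x)(1-F_r(x))\frac{|f_r'(x)|}{f_r(x)^2}=1+\frac1r .$$ In particular, $\gamma$ of the Cauchy distribution ($r=1$) equals $2$.
   Context: Bi-$s^*$-concavity for $s\in(-1,0)$, $s^*=s/(1+s)$: both $x\mapsto F(x)^{s^*}$ and $x\mapsto(1-F(x))^{s^*}$ are convex on $\mathbb{R}$. *)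

theory Defs
  imports "HOL-Analysis.Analysis"
begin

definition student_t_density :: "real \<Rightarrow> real \<Rightarrow> real" where
  "student_t_density r x =
     Gamma ((r + 1) / 2) / (sqrt (pi * r) * Gamma (r / 2)) * (1 + x\<^sup>2 / r) powr (-(r + 1) / 2)"

definition student_t_cdf :: "real \<Rightarrow> real \<Rightarrow> real" where
  "student_t_cdf r x = (LINT t:{..x}|lborel. student_t_density r t)"

definition gamma_functional :: "(real \<Rightarrow> real) \<Rightarrow> (real \<Rightarrow> real) \<Rightarrow> real" where
  "gamma_functional F f = (SUP x. F x * (1 - F x) * \<bar>deriv f x\<bar> / (f x)\<^sup>2)"

end

(*
  The density satisfies f' x = -(r + 1) x f x / (r + x^2). Integrating explicit antiderivatives
  over (x, \<infinity>) gives the tail bounds  x f x / r \<le> 1 - F x  (for x \<ge> 1)  and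
  x (1 - F x) \<le> (r + x^2) f x / r  (for all x).

  For p < 0, g powr p is convex as soon as (p - 1) g'^2 + g g'' \<le> 0. For g = 1 - F and p = -1/r
  this condition is exactly the upper tail bound; convexity of F powr (-1/r) then follows from the
  symmetry F (-x) = 1 - F x.

  The ratio inside gamma equals (r + 1) F x (1 - F x) |x| / ((r + x^2) f x). The upper tail bound
  keeps it below 1 + 1/r, and the lower one together with F x \<longrightarrow> 1 shows that it tends
  to 1 + 1/r as x \<longrightarrow> \<infinity>.

  The normalisation of f reduces, via the substitution x = sqrt (r t / (1 - t)), to a Beta integral.
*)
theory Submission
  imports Defs "HOL-Real_Asymp.Real_Asymp"
begin

lemma set_integral_Beta_real:
  fixes a b :: real
  assumes "a > 0" "b > 0"
  shows "set_integrable lborel {0<..<1} (\<lambda>t. t powr (a - 1) * (1 - t) powr (b - 1))"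
    and "(LBINT t:{0<..<1}. t powr (a - 1) * (1 - t) powr (b - 1)) = Beta a b"
proof -
  show int: "set_integrable lborel {0<..<1} (\<lambda>t. t powr (a - 1) * (1 - t) powr (b - 1))"
    by (rule set_integrable_subset[OF integrable_Beta[OF assms]]) auto
  have "((\<lambda>t. t powr (a - 1) * (1 - t) powr (b - 1)) has_integral Beta a b) {0<..<1}"
    using has_integral_Beta_real[OF assms] by (simp add: has_integral_Icc_iff_Ioo)
  then show "(LBINT t:{0<..<1}. t powr (a - 1) * (1 - t) powr (b - 1)) = Beta a b"
    using set_borel_integral_eq_integral(2)[OF int] by (simp add: integral_unique)
qed

lemma convex_on_reflect:
  fixes f :: "'a::real_vector \<Rightarrow> real"
  assumes "convex_on UNIV f"
  shows "convex_on UNIV (\<lambda>x. f (- x))"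
proof (rule convex_onI)
  fix t :: real and x y :: 'a
  assume "0 < t" "t < 1"
  then have "f ((1 - t) *\<^sub>R - x + t *\<^sub>R - y) \<le> (1 - t) * f (- x) + t * f (- y)"
    using convex_onD[OF assms, of t "- x" "- y"] by simp
  then show "f (- ((1 - t) *\<^sub>R x + t *\<^sub>R y)) \<le> (1 - t) * f (- x) + t * f (- y)"
    by (simp add: algebra_simps)
qed simp

lemma convex_on_powr_neg:
  fixes g g' g'' :: "real \<Rightarrow> real" and p :: real
  assumes p: "p < 0"
    and g': "\<And>x. (g has_real_derivative g' x) (at x)"
    and g'': "\<And>x. (g' has_real_derivative g'' x) (at x)"
    and pos: "\<And>x. g x > 0"
    and curv: "\<And>x. (p - 1) * (g' x)\<^sup>2 + g x * g'' x \<le> 0"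
  shows "convex_on UNIV (\<lambda>x. g x powr p)"
proof (rule convex_on_realI[where f' = "\<lambda>x. p * (g x powr (p - 1) * g' x)"])
  show "((\<lambda>x. g x powr p) has_real_derivative p * (g x powr (p - 1) * g' x)) (at x)" for x
    using DERIV_fun_powr[OF g' pos, of p] by (simp add: mult.assoc)
  show "p * (g x powr (p - 1) * g' x) \<le> p * (g y powr (p - 1) * g' y)" if "x \<le> y" for x y
  proof (rule DERIV_nonneg_imp_nondecreasing[OF that])
    fix t
    have powr_split: "g t powr (p - 1) = g t powr (p - 2) * g t"
      using powr_add[of "g t" "p - 2" 1] pos[of t] by simp
    have "((\<lambda>x. p * (g x powr (p - 1) * g' x)) has_real_derivative
        p * (g t powr (p - 2) * ((p - 1) * (g' t)\<^sup>2 + g t * g'' t))) (at t)"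
      using DERIV_cmult[OF DERIV_mult[OF DERIV_fun_powr[OF g'[of t] pos[of t], of "p - 1"] g''[of t]], of p]
      by (simp add: powr_split algebra_simps power2_eq_square)
    moreover have "p * (g t powr (p - 2) * ((p - 1) * (g' t)\<^sup>2 + g t * g'' t)) \<ge> 0"
      using p curv[of t] by (intro mult_nonpos_nonpos mult_nonneg_nonpos) auto
    ultimately show "\<exists>d. ((\<lambda>x. p * (g x powr (p - 1) * g' x)) has_real_derivative d) (at t) \<and> d \<ge> 0"
      by blast
  qed
qed simp

lemma set_integral_Ioi_eq_of_deriv:
  fixes \<phi> \<psi> :: "real \<Rightarrow> real"
  assumes deriv: "\<And>t. t > a \<Longrightarrow> (\<phi> has_real_derivative \<psi> t) (at t)"
    and cont: "\<And>t. t > a \<Longrightarrow> isCont \<psi> t"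
    and nonneg: "\<And>t. t > a \<Longrightarrow> 0 \<le> \<psi> t"
    and at_a: "isCont \<phi> a"
    and at_top: "(\<phi> \<longlongrightarrow> 0) at_top"
  shows "set_integrable lborel {a<..} \<psi>" and "(LBINT t:{a<..}. \<psi> t) = - \<phi> a"
proof -
  have lim_a: "((\<phi> \<circ> real_of_ereal) \<longlongrightarrow> \<phi> a) (at_right (ereal a))"
    unfolding ereal_tendsto_simps
    using at_a[unfolded isCont_def] by (rule tendsto_mono[OF at_le, rotated]) simp
  have lim_top: "((\<phi> \<circ> real_of_ereal) \<longlongrightarrow> 0) (at_left \<infinity>)"
    unfolding ereal_tendsto_simps using at_top by simp
  note FTC = interval_integral_FTC_nonneg[where a="ereal a" and b=\<infinity>, OF _ _ _ _ lim_a lim_top]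
  show "set_integrable lborel {a<..} \<psi>" "(LBINT t:{a<..}. \<psi> t) = - \<phi> a"
    using FTC deriv cont nonneg by (auto simp: interval_integral_to_infinity_eq)
qed

lemma student_t_substitution_identity:
  fixes r t :: real
  assumes r: "r > 0" and t: "0 < t" "t < 1"
  shows "(1 + (sqrt (r * t / (1 - t)))\<^sup>2 / r) powr (-(r + 1) / 2)
           * (r / ((1 - t)\<^sup>2 * (2 * sqrt (r * t / (1 - t)))))
         = sqrt r / 2 * (t powr (1 / 2 - 1) * (1 - t) powr (r / 2 - 1))"
proof -
  define s where "s = 1 - t"
  have s: "s > 0"
    using t by (simp add: s_def)
  have "1 + (sqrt (r * t / s))\<^sup>2 / r = inverse s"
    using r t s by (simp add: s_def field_simps)
  moreover have "inverse s powr (-(r + 1) / 2) = s powr (r / 2 - 1 + 1 + 1 / 2)"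
  proof -
    have "inverse s powr (-(r + 1) / 2) = inverse (s powr (- ((r + 1) / 2)))"
      by (simp only: inverse_powr minus_divide_left)
    also have "\<dots> = s powr ((r + 1) / 2)"
      by (simp only: powr_minus inverse_inverse_eq)
    finally show ?thesis by (simp add: add_divide_distrib)
  qed
  ultimately have lhs: "(1 + (sqrt (r * t / s))\<^sup>2 / r) powr (-(r + 1) / 2)
      = s powr (r / 2 - 1) * s * sqrt s"
    using s by (simp only: powr_add powr_one powr_half_sqrt less_imp_le)
  have pow_t: "t powr (1 / 2 - 1) = 1 / sqrt t"
    using t by (simp add: powr_minus_divide powr_half_sqrt)
  have sqrt_quot: "sqrt (r * t / s) = sqrt r * sqrt t / sqrt s"
    by (simp add: real_sqrt_mult real_sqrt_divide)
  have "sqrt s * sqrt s = s" "sqrt r * sqrt r = r"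
    using s r by simp_all
  then show ?thesis
    unfolding s_def[symmetric] lhs unfolding pow_t sqrt_quot using r t s
    by (simp add: field_simps power2_eq_square)
qed

lemma student_t_substituted_integral:
  fixes r :: real
  assumes r: "r > 0"
  defines "g \<equiv> \<lambda>t. (1 + (sqrt (r * t / (1 - t)))\<^sup>2 / r) powr (-(r + 1) / 2)
                   * (r / ((1 - t)\<^sup>2 * (2 * sqrt (r * t / (1 - t)))))"
  shows "set_integrable lborel {0<..<1} g"
    and "(LBINT t:{0<..<1}. g t) = sqrt r / 2 * Beta (1 / 2) (r / 2)"
proof -
  define \<beta> where "\<beta> t = t powr (1 / 2 - 1) * (1 - t) powr (r / 2 - 1)" for t :: real
  have g_eq: "g t = sqrt r / 2 * \<beta> t" if "t \<in> {0<..<1}" for t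
    using student_t_substitution_identity[OF r] that by (simp add: g_def \<beta>_def)
  have "1 / 2 > (0 :: real)" "r / 2 > 0"
    using r by simp_all
  note Beta = set_integral_Beta_real[OF this, folded \<beta>_def]
  have "set_integrable lborel {0<..<1} (\<lambda>t. sqrt r / 2 * \<beta> t)"
    using Beta(1) by (rule set_integrable_mult_right)
  moreover have "set_integrable lborel {0<..<1} g
      = set_integrable lborel {0<..<1} (\<lambda>t. sqrt r / 2 * \<beta> t)"
    by (rule set_integrable_cong) (simp_all add: g_eq)
  ultimately show "set_integrable lborel {0<..<1} g"
    by simp
  have "(LBINT t:{0<..<1}. g t) = (LBINT t:{0<..<1}. sqrt r / 2 * \<beta> t)"
    by (rule set_lebesgue_integral_cong) (simp_all add: g_eq)
  also have "\<dots> = sqrt r / 2 * Beta (1 / 2) (r / 2)"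
    using Beta(2) r by (simp add: set_integral_mult_right)
  finally show "(LBINT t:{0<..<1}. g t) = sqrt r / 2 * Beta (1 / 2) (r / 2)" .
qed

lemma has_real_derivative_sqrt_odds:
  fixes r t :: real
  assumes "r > 0" "0 < t" "t < 1"
  shows "((\<lambda>t. sqrt (r * t / (1 - t))) has_real_derivative
           r / ((1 - t)\<^sup>2 * (2 * sqrt (r * t / (1 - t))))) (at t)"
proof -
  have "((\<lambda>t. r * t / (1 - t)) has_real_derivative r / (1 - t)\<^sup>2) (at t)"
    using assms by (auto intro!: derivative_eq_intros simp: field_simps power2_eq_square)
  from DERIV_chain2[OF DERIV_real_sqrt this]
  have "((\<lambda>t. sqrt (r * t / (1 - t))) has_real_derivative
      inverse (sqrt (r * t / (1 - t))) / 2 * (r / (1 - t)\<^sup>2)) (at t)"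
    using assms by simp
  then show ?thesis
    by (simp add: field_simps)
qed

lemma ereal_tendsto_sqrt_odds:
  fixes r :: real
  assumes "r > 0"
  shows "((ereal \<circ> (\<lambda>t. sqrt (r * t / (1 - t))) \<circ> real_of_ereal) \<longlongrightarrow> 0) (at_right 0)"
    and "((ereal \<circ> (\<lambda>t. sqrt (r * t / (1 - t))) \<circ> real_of_ereal) \<longlongrightarrow> \<infinity>) (at_left 1)"
proof -
  have "((\<lambda>t. sqrt (r * t / (1 - t))) \<longlongrightarrow> 0) (at_right 0)"
    using assms by real_asymp
  then show "((ereal \<circ> (\<lambda>t. sqrt (r * t / (1 - t))) \<circ> real_of_ereal) \<longlongrightarrow> 0) (at_right 0)"
    unfolding zero_ereal_def ereal_tendsto_simps by (simp add: comp_def)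
  have "filterlim (\<lambda>t. sqrt (r * t / (1 - t))) at_top (at_left 1)"
    using assms by real_asymp
  then show "((ereal \<circ> (\<lambda>t. sqrt (r * t / (1 - t))) \<circ> real_of_ereal) \<longlongrightarrow> \<infinity>) (at_left 1)"
    unfolding one_ereal_def ereal_tendsto_simps by (simp add: comp_def)
qed

lemma student_t_kernel_integral:
  fixes r :: real
  assumes r: "r > 0"
  shows "set_integrable lborel {0<..} (\<lambda>x. (1 + x\<^sup>2 / r) powr (-(r + 1) / 2))"
    and "(LBINT x:{0<..}. (1 + x\<^sup>2 / r) powr (-(r + 1) / 2)) = sqrt r / 2 * Beta (1 / 2) (r / 2)"
proof -
  define k where "k x = (1 + x\<^sup>2 / r) powr (-(r + 1) / 2)" for x :: real
  define h where "h t = sqrt (r * t / (1 - t))" for t :: real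
  define h' where "h' t = r / ((1 - t)\<^sup>2 * (2 * sqrt (r * t / (1 - t))))" for t :: real
  have Ioo: "einterval 0 1 = {0<..<(1::real)}" and Ioi: "einterval 0 \<infinity> = ({0<..} :: real set)"
    by (auto simp: einterval_def)
  note substituted = student_t_substituted_integral[OF r]
  have cont_k: "isCont k x" for x
  proof -
    have "1 + x\<^sup>2 / r > 0"
      using r by (simp add: add_pos_nonneg)
    then show ?thesis
      unfolding k_def using r by (intro continuous_intros) auto
  qed
  have cont_h': "isCont h' t" if "0 < t" "t < 1" for t
    unfolding h'_def using that r by (intro continuous_intros) auto
  have h'_nonneg: "0 \<le> h' t" if "0 \<le> t" "t \<le> 1" for t
    unfolding h'_def using that r by (intro divide_nonneg_nonneg mult_nonneg_nonneg) auto
  note lims = ereal_tendsto_sqrt_odds[OF r, folded h_def]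
  have deriv: "(h has_real_derivative h' t) (at t)" if "0 < t" "t < 1" for t
    unfolding h_def h'_def using r that by (rule has_real_derivative_sqrt_odds)
  have integrable: "set_integrable lborel (einterval 0 1) (\<lambda>t. k (h t) * h' t)"
    using substituted(1) by (simp add: Ioo k_def h_def h'_def)
  note S = interval_integral_substitution_nonneg[where a=0 and b=1 and g=h and g'=h' and f=k,
      OF _ _ _ _ _ _ lims integrable]
  have "set_integrable lborel (einterval 0 \<infinity>) k"
    by (rule S) (auto intro!: cont_k cont_h' h'_nonneg deriv simp: k_def)
  moreover have "(LBINT x=0..\<infinity>. k x) = (LBINT t=0..1. k (h t) * h' t)"
    by (rule S) (auto intro!: cont_k cont_h' h'_nonneg deriv simp: k_def)
  ultimately have "set_integrable lborel {0<..} k"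
    and "(LBINT x:{0<..}. k x) = sqrt r / 2 * Beta (1 / 2) (r / 2)"
    using substituted(2)
    by (simp_all add: Ioi Ioo k_def h_def h'_def interval_lebesgue_integral_def zero_ereal_def one_ereal_def)
  then show "set_integrable lborel {0<..} (\<lambda>x. (1 + x\<^sup>2 / r) powr (-(r + 1) / 2))"
    and "(LBINT x:{0<..}. (1 + x\<^sup>2 / r) powr (-(r + 1) / 2)) = sqrt r / 2 * Beta (1 / 2) (r / 2)"
    unfolding k_def .
qed

locale student_t =
  fixes r :: real
  assumes r_pos: "r > 0"
begin

abbreviation f :: "real \<Rightarrow> real" where "f \<equiv> student_t_density r"
abbreviation F :: "real \<Rightarrow> real" where "F \<equiv> student_t_cdf r"

definition norm_const :: real where
  "norm_const = Gamma ((r + 1) / 2) / (sqrt (pi * r) * Gamma (r / 2))"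

lemma density_eq: "f x = norm_const * (1 + x\<^sup>2 / r) powr (-(r + 1) / 2)"
  by (simp add: student_t_density_def norm_const_def)

lemma norm_const_pos: "norm_const > 0"
  using r_pos by (simp add: norm_const_def)

lemma base_pos: "1 + x\<^sup>2 / r > 0"
  using r_pos by (simp add: add_pos_nonneg)

lemma f_pos: "f x > 0"
  using norm_const_pos base_pos[of x] by (simp add: density_eq)

lemma f_even: "f (- x) = f x"
  by (simp add: density_eq)

lemma isCont_f: "isCont f x"
  unfolding density_eq using base_pos[of x] r_pos by (intro continuous_intros) auto

lemma continuous_on_f: "continuous_on A f"
  by (simp add: continuous_at_imp_continuous_on isCont_f)

lemma f_has_derivative: "(f has_real_derivative - (r + 1) * x / (r + x\<^sup>2) * f x) (at x)"
proof -
  define u where "u = 1 + x\<^sup>2 / r"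
  have u: "u > 0" "r * u = r + x\<^sup>2"
    using base_pos[of x] r_pos by (simp_all add: u_def field_simps)
  have "((\<lambda>x. 1 + x\<^sup>2 / r) has_real_derivative 2 * x / r) (at x)"
    using r_pos by (auto intro!: derivative_eq_intros)
  from DERIV_cmult[OF DERIV_fun_powr[OF this base_pos], of norm_const "-(r + 1) / 2"]
  have "(f has_real_derivative norm_const * (-(r + 1) / 2 * u powr (-(r + 1) / 2 - 1) * (2 * x / r))) (at x)"
    by (simp add: density_eq[abs_def] u_def)
  moreover have "u powr (-(r + 1) / 2 - 1) = u powr (-(r + 1) / 2) / u"
    using u by (simp add: powr_diff)
  moreover have "norm_const * (-(r + 1) / 2 * (u powr (-(r + 1) / 2) / u) * (2 * x / r))
      = - (r + 1) * x / (r * u) * f x"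
    unfolding density_eq u_def[symmetric] using u(1) r_pos by (simp add: field_simps)
  ultimately show ?thesis
    by (simp add: u)
qed

lemma deriv_f: "deriv f x = - (r + 1) * x / (r + x\<^sup>2) * f x"
  using f_has_derivative by (rule DERIV_imp_deriv)

lemma set_integrable_Ioi_0: "set_integrable lborel {0<..} f"
  unfolding density_eq using student_t_kernel_integral(1)[OF r_pos]
  by (rule set_integrable_mult_right)

lemma integral_Ioi_0: "(LBINT x:{0<..}. f x) = 1 / 2"
proof -
  have Beta: "Beta (1 / 2) (r / 2) = sqrt pi * Gamma (r / 2) / Gamma ((r + 1) / 2)"
    by (simp add: Beta_def Gamma_one_half_real add_divide_distrib add.commute)
  have "Gamma (r / 2) \<noteq> 0" "Gamma ((1 + r) / 2) \<noteq> 0"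
    using r_pos by (simp_all add: Gamma_real_pos less_imp_neq[symmetric])
  have "(LBINT x:{0<..}. f x) = norm_const * (sqrt r / 2 * Beta (1 / 2) (r / 2))"
    unfolding density_eq using student_t_kernel_integral(2)[OF r_pos]
    by (simp add: set_integral_mult_right)
  also have "\<dots> = 1 / 2"
    unfolding Beta norm_const_def using \<open>Gamma (r / 2) \<noteq> 0\<close> \<open>Gamma ((1 + r) / 2) \<noteq> 0\<close> r_pos
    by (simp add: real_sqrt_mult field_simps)
  finally show ?thesis .
qed

lemma interval_integral_Iic_0: "(LBINT x=-\<infinity>..0. f x) = 1 / 2"
proof -
  have "(LBINT x=-\<infinity>..0. f x) = (LBINT x=-0..-(-\<infinity>). f (- x))"
    by (rule interval_integral_reflect)
  also have "\<dots> = (LBINT x:{0<..}. f x)"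
    by (simp add: f_even interval_integral_to_infinity_eq[symmetric] zero_ereal_def)
  finally show ?thesis
    using integral_Ioi_0 by simp
qed

lemma set_integrable_f: "set_integrable lborel A f" if "A \<in> sets borel"
proof -
  have "interval_lebesgue_integrable lborel 0 \<infinity> (\<lambda>x. f (- x))"
    using set_integrable_Ioi_0 by (simp add: f_even interval_lebesgue_integral_0_infty)
  then have "set_integrable lborel {..<0} f"
    using interval_integrable_mirror[of 0 \<infinity> f]
    by (simp add: interval_lebesgue_integrable_def zero_ereal_def)
  moreover have "set_integrable lborel {0..1} f"
    by (rule borel_integrable_atLeastAtMost') (rule continuous_on_f)
  ultimately have "set_integrable lborel ({..<0} \<union> {0..1} \<union> {0<..}) f"
    using set_integrable_Ioi_0 by (intro set_integrable_Un) auto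
  moreover have "{..<0} \<union> {0..1} \<union> {0<..} = (UNIV :: real set)"
    by auto
  ultimately show ?thesis
    using set_integrable_subset that by fastforce
qed

lemma interval_integrable_f: "interval_lebesgue_integrable lborel a b f"
  unfolding interval_lebesgue_integrable_def by (auto intro!: set_integrable_f)

lemma F_eq_half_plus_integral: "F x = 1 / 2 + (LBINT t=0..x. f t)"
proof -
  have "F x = (LBINT t:{..<x}. f t)"
    unfolding student_t_cdf_def
    by (rule set_integral_discrete_difference[where X="{x}"]) auto
  also have "\<dots> = (LBINT t=-\<infinity>..x. f t)"
    by (simp add: interval_lebesgue_integral_def)
  also have "\<dots> = (LBINT t=-\<infinity>..0. f t) + (LBINT t=0..x. f t)"
    by (rule interval_integral_sum[symmetric]) (rule interval_integrable_f)
  finally show ?thesis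
    using interval_integral_Iic_0 by simp
qed

lemma one_minus_F_eq_integral: "1 - F x = (LBINT t:{x<..}. f t)"
proof -
  have "(LBINT t=0..x. f t) + (LBINT t=x..\<infinity>. f t) = (LBINT t=0..\<infinity>. f t)"
    by (rule interval_integral_sum) (rule interval_integrable_f)
  then show ?thesis
    using integral_Ioi_0 F_eq_half_plus_integral[of x]
    by (simp add: interval_integral_to_infinity_eq zero_ereal_def)
qed

lemma F_has_derivative: "(F has_real_derivative f x) (at x)"
proof -
  have "((\<lambda>u. LBINT t=ereal 0..ereal u. f t) has_vector_derivative f x)
      (at x within {-\<bar>x\<bar> - 1..\<bar>x\<bar> + 1})"
    by (rule interval_integral_FTC2) (auto intro: continuous_on_f)
  then have "((\<lambda>u. LBINT t=0..u. f t) has_real_derivative f x) (at x)"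
    by (subst (asm) at_within_Icc_at)
      (auto simp: zero_ereal_def has_real_derivative_iff_has_vector_derivative)
  then have "((\<lambda>u. 1 / 2 + (LBINT t=0..u. f t)) has_real_derivative f x) (at x)"
    by (auto intro!: derivative_eq_intros)
  then show ?thesis
    by (simp add: F_eq_half_plus_integral[abs_def])
qed

lemma F_reflect: "F (- x) = 1 - F x"
proof -
  have "((\<lambda>x. F x + F (- x)) has_real_derivative 0) (at x)" for x
    using DERIV_add[OF F_has_derivative DERIV_chain2[OF F_has_derivative DERIV_minus[OF DERIV_ident]]]
    by (simp add: f_even)
  from DERIV_isconst_all[OF allI[OF this], of x 0] show ?thesis
    using F_eq_half_plus_integral[of 0] by (simp add: zero_ereal_def)
qed

lemma F_mono: "F x \<le> F y" if "x \<le> y"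
  using that F_has_derivative f_pos
  by (intro DERIV_nonneg_imp_nondecreasing[of x y F]) (auto intro: less_imp_le)

lemma mult_f_le: "x * f x \<le> norm_const * sqrt r * (1 + x\<^sup>2 / r) powr (- r / 2)" if "x \<ge> 0"
proof -
  define u where "u = 1 + x\<^sup>2 / r"
  have u: "u > 0" "r * u = r + x\<^sup>2"
    using base_pos[of x] r_pos by (simp_all add: u_def field_simps)
  have "u powr (-(r + 1) / 2) = u powr (- r / 2) * u powr (- (1 / 2))"
    by (simp flip: powr_add add: diff_divide_distrib)
  also have "\<dots> = u powr (- r / 2) / sqrt u"
    using u by (simp add: powr_minus_divide powr_half_sqrt)
  finally have pow: "u powr (-(r + 1) / 2) = u powr (- r / 2) / sqrt u" .
  have "x \<le> sqrt (r * u)"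
    using that u r_pos by (simp add: real_le_rsqrt)
  then have "x \<le> sqrt r * sqrt u"
    by (simp add: real_sqrt_mult)
  then have "x / sqrt u \<le> sqrt r"
    using u by (simp add: divide_le_eq)
  then have "x * (u powr (- r / 2) / sqrt u) \<le> sqrt r * u powr (- r / 2)"
    by (metis mult.commute mult_right_mono powr_ge_zero times_divide_eq_right)
  then have "norm_const * (x * (u powr (- r / 2) / sqrt u)) \<le> norm_const * (sqrt r * u powr (- r / 2))"
    using norm_const_pos by (intro mult_left_mono) auto
  then show ?thesis
    unfolding density_eq u_def[symmetric] pow by (simp add: algebra_simps)
qed

lemma tendsto_mult_f: "((\<lambda>x. x * f x) \<longlongrightarrow> 0) at_top"
proof (rule tendsto_sandwich[where f="\<lambda>_. 0"
      and h="\<lambda>x. norm_const * sqrt r * (1 + x\<^sup>2 / r) powr (- r / 2)"])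
  show "\<forall>\<^sub>F x in at_top. 0 \<le> x * f x"
    using eventually_ge_at_top[of 0] by eventually_elim (simp add: f_pos less_imp_le)
  show "\<forall>\<^sub>F x in at_top. x * f x \<le> norm_const * sqrt r * (1 + x\<^sup>2 / r) powr (- r / 2)"
    using eventually_ge_at_top[of 0] by eventually_elim (rule mult_f_le)
  have "filterlim (\<lambda>x. 1 + x\<^sup>2 / r) at_top at_top"
    using r_pos by real_asymp
  then show "((\<lambda>x. norm_const * sqrt r * (1 + x\<^sup>2 / r) powr (- r / 2)) \<longlongrightarrow> 0) at_top"
    using r_pos by (intro tendsto_mult_right_zero tendsto_neg_powr) auto
qed simp

definition tail_majorant :: "real \<Rightarrow> real" where
  "tail_majorant x = (r + x\<^sup>2) * f x / (r * x)"

lemma tendsto_tail_majorant: "(tail_majorant \<longlongrightarrow> 0) at_top"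
proof -
  have "((\<lambda>x. (1 / x\<^sup>2 + 1 / r) * (x * f x)) \<longlongrightarrow> (0 + 1 / r) * 0) at_top"
    by (intro tendsto_intros tendsto_mult_f) real_asymp
  moreover have "\<forall>\<^sub>F x in at_top. (1 / x\<^sup>2 + 1 / r) * (x * f x) = tail_majorant x"
    using eventually_gt_at_top[of 0]
    by eventually_elim (use r_pos in \<open>simp add: tail_majorant_def field_simps power2_eq_square\<close>)
  ultimately show ?thesis
    by (simp add: tendsto_cong)
qed

lemma tail_majorant_has_derivative:
  "(tail_majorant has_real_derivative - f x * (1 + 1 / x\<^sup>2)) (at x)" if "x > 0"
proof -
  have "r + x\<^sup>2 > 0"
    using r_pos by (simp add: add_pos_nonneg)
  then have f': "(r + x\<^sup>2) * (- (r + 1) * x / (r + x\<^sup>2) * f x) = - (r + 1) * x * f x"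
    by simp
  have "((\<lambda>x. (r + x\<^sup>2) * f x / (r * x)) has_real_derivative
      ((2 * x * f x + (r + x\<^sup>2) * (- (r + 1) * x / (r + x\<^sup>2) * f x)) * (r * x)
        - (r + x\<^sup>2) * f x * r) / (r * x)\<^sup>2) (at x)"
    using that r_pos by (auto intro!: derivative_eq_intros f_has_derivative simp: power2_eq_square)
  moreover have "((2 * x * f x + - (r + 1) * x * f x) * (r * x) - (r + x\<^sup>2) * f x * r) / (r * x)\<^sup>2
      = - f x * (1 + 1 / x\<^sup>2)"
    using that r_pos by (simp add: field_simps power2_eq_square)
  ultimately show ?thesis
    unfolding f' by (simp add: tail_majorant_def[abs_def])
qed

lemma tail_le_tail_majorant: "1 - F x \<le> tail_majorant x" if "x > 0"
proof -
  define \<psi> where "\<psi> t = f t * (1 + 1 / t\<^sup>2)" for t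
  have deriv: "((\<lambda>t. - tail_majorant t) has_real_derivative \<psi> t) (at t)" if "t > x" for t
    using DERIV_minus[OF tail_majorant_has_derivative] that \<open>x > 0\<close> by (simp add: \<psi>_def)
  have cont: "isCont \<psi> t" if "t > x" for t
    unfolding \<psi>_def using that \<open>x > 0\<close> by (intro continuous_intros isCont_f) auto
  have nonneg: "0 \<le> \<psi> t" for t
    unfolding \<psi>_def using f_pos[of t] by (simp add: add_nonneg_nonneg)
  have at_x: "isCont (\<lambda>t. - tail_majorant t) x"
    using tail_majorant_has_derivative[OF \<open>x > 0\<close>] by (intro continuous_intros DERIV_isCont)
  have at_top: "((\<lambda>t. - tail_majorant t) \<longlongrightarrow> 0) at_top"
    using tendsto_minus[OF tendsto_tail_majorant] by simp
  note FTC = set_integral_Ioi_eq_of_deriv[OF deriv cont nonneg at_x at_top]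
  have "1 - F x = (LBINT t:{x<..}. f t)"
    by (rule one_minus_F_eq_integral)
  also have "\<dots> \<le> (LBINT t:{x<..}. \<psi> t)"
    using FTC(1) set_integrable_f[of "{x<..}"]
    by (intro set_integral_mono) (auto simp: \<psi>_def f_pos less_imp_le add_increasing2)
  also have "\<dots> = tail_majorant x"
    using FTC(2) by simp
  finally show ?thesis .
qed

lemma tail_ge_mult_f: "x * f x / r \<le> 1 - F x" if "x \<ge> 1"
proof -
  define \<psi> where "\<psi> t = f t * (t\<^sup>2 - 1) / (r + t\<^sup>2)" for t
  have deriv: "((\<lambda>t. - (t * f t) / r) has_real_derivative \<psi> t) (at t)" for t
  proof -
    have "r + t\<^sup>2 > 0"
      using r_pos by (simp add: add_pos_nonneg)
    then have "- (1 * f t + - (r + 1) * t / (r + t\<^sup>2) * f t * t) / r = \<psi> t"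
      unfolding \<psi>_def using r_pos by (simp add: divide_simps) (simp add: algebra_simps power2_eq_square)
    with DERIV_cdivide[OF DERIV_minus[OF DERIV_mult[OF DERIV_ident f_has_derivative[of t]]], of r]
    show ?thesis
      by simp
  qed
  have cont: "isCont \<psi> t" for t
    unfolding \<psi>_def using add_pos_nonneg[OF r_pos zero_le_power2[of t]]
    by (intro continuous_intros isCont_f) auto
  have nonneg: "0 \<le> \<psi> t" if "t > x" for t
    unfolding \<psi>_def using that \<open>x \<ge> 1\<close> f_pos[of t] r_pos
    by (intro divide_nonneg_nonneg mult_nonneg_nonneg) (auto simp: one_le_power)
  have at_x: "isCont (\<lambda>t. - (t * f t) / r) x"
    using deriv[of x] by (rule DERIV_isCont)
  have at_top: "((\<lambda>t. - (t * f t) / r) \<longlongrightarrow> 0) at_top"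
    using tendsto_divide[OF tendsto_minus[OF tendsto_mult_f] tendsto_const[of r]] r_pos by simp
  note FTC = set_integral_Ioi_eq_of_deriv[OF deriv cont nonneg at_x at_top]
  have "x * f x / r = (LBINT t:{x<..}. \<psi> t)"
    using FTC(2) by simp
  also have "\<dots> \<le> (LBINT t:{x<..}. f t)"
  proof (rule set_integral_mono)
    fix t
    have "(t\<^sup>2 - 1) / (r + t\<^sup>2) \<le> 1"
      using r_pos add_pos_nonneg[OF r_pos zero_le_power2[of t]] by simp
    then show "\<psi> t \<le> f t"
      unfolding \<psi>_def using f_pos[of t] mult_left_mono[of _ 1 "f t"] by fastforce
  qed (use FTC(1) set_integrable_f[of "{x<..}"] in auto)
  also have "\<dots> = 1 - F x"
    by (rule one_minus_F_eq_integral[symmetric])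
  finally show ?thesis .
qed

lemma tail_pos: "0 < 1 - F x"
proof (cases "x \<ge> 1")
  case True
  have "0 < x * f x / r"
    using True f_pos[of x] r_pos by simp
  also have "\<dots> \<le> 1 - F x"
    using tail_ge_mult_f[OF True] .
  finally show ?thesis .
next
  case False
  have "0 < f 1 / r"
    using f_pos[of 1] r_pos by simp
  also have "\<dots> \<le> 1 - F 1"
    using tail_ge_mult_f[of 1] by simp
  also have "\<dots> \<le> 1 - F x"
    using F_mono[of x 1] False by simp
  finally show ?thesis .
qed

lemma F_pos: "0 < F x"
  using tail_pos[of "- x"] by (simp add: F_reflect)

lemma mult_tail_le: "x * (1 - F x) \<le> (r + x\<^sup>2) * f x / r"
proof (cases "x > 0")
  case True
  then have "x * (1 - F x) \<le> x * tail_majorant x"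
    using tail_le_tail_majorant by (intro mult_left_mono) auto
  also have "\<dots> = (r + x\<^sup>2) * f x / r"
    using True by (simp add: tail_majorant_def)
  finally show ?thesis .
next
  case False
  then have "x * (1 - F x) \<le> 0"
    using tail_pos[of x] by (simp add: mult_nonpos_nonneg)
  also have "0 \<le> (r + x\<^sup>2) * f x / r"
    using r_pos f_pos[of x] by (simp add: add_pos_nonneg less_imp_le)
  finally show ?thesis .
qed

lemma convex_tail_powr: "convex_on UNIV (\<lambda>x. (1 - F x) powr (- 1 / r))"
proof (rule convex_on_powr_neg)
  show "((\<lambda>x. 1 - F x) has_real_derivative - f x) (at x)" for x
    using F_has_derivative by (auto intro!: derivative_eq_intros)
  show "((\<lambda>x. - f x) has_real_derivative - (- (r + 1) * x / (r + x\<^sup>2) * f x)) (at x)" for x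
    by (rule DERIV_minus[OF f_has_derivative])
  show "(- 1 / r - 1) * (- f x)\<^sup>2 + (1 - F x) * - (- (r + 1) * x / (r + x\<^sup>2) * f x) \<le> 0" for x
  proof -
    have "r + x\<^sup>2 > 0"
      using r_pos by (simp add: add_pos_nonneg)
    then have "x * (1 - F x) * r / (r + x\<^sup>2) \<le> f x"
      using mult_tail_le[of x] r_pos by (simp add: field_simps)
    then have "(r + 1) / r * f x * (x * (1 - F x) * r / (r + x\<^sup>2) - f x) \<le> 0"
      using r_pos f_pos[of x] by (intro mult_nonneg_nonpos) auto
    moreover have "(- 1 / r - 1) * (- f x)\<^sup>2 + (1 - F x) * - (- (r + 1) * x / (r + x\<^sup>2) * f x)
        = (r + 1) / r * f x * (x * (1 - F x) * r / (r + x\<^sup>2) - f x)"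
      using r_pos \<open>r + x\<^sup>2 > 0\<close> by (simp add: field_simps power2_eq_square)
    ultimately show ?thesis
      by simp
  qed
qed (use r_pos tail_pos in auto)

lemma convex_F_powr: "convex_on UNIV (\<lambda>x. F x powr (- 1 / r))"
proof -
  have "1 - F (- x) = F x" for x
    using F_reflect[of "- x"] by simp
  then show ?thesis
    using convex_on_reflect[OF convex_tail_powr] by simp
qed

lemma tendsto_F_at_top: "(F \<longlongrightarrow> 1) at_top"
proof (rule tendsto_sandwich[where f="\<lambda>x. 1 - tail_majorant x" and h="\<lambda>_. 1"])
  show "\<forall>\<^sub>F x in at_top. 1 - tail_majorant x \<le> F x"
    using eventually_gt_at_top[of 0] by eventually_elim (auto dest: tail_le_tail_majorant)
  show "\<forall>\<^sub>F x in at_top. F x \<le> 1"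
    using tail_pos by (simp add: less_imp_le)
  show "((\<lambda>x. 1 - tail_majorant x) \<longlongrightarrow> 1) at_top"
    using tendsto_diff[OF tendsto_const tendsto_tail_majorant, of 1] by simp
qed simp

definition gamma_ratio :: "real \<Rightarrow> real" where
  "gamma_ratio x = F x * (1 - F x) * \<bar>deriv f x\<bar> / (f x)\<^sup>2"

lemma gamma_ratio_eq: "gamma_ratio x = (r + 1) * (F x * (1 - F x) * \<bar>x\<bar>) / ((r + x\<^sup>2) * f x)"
proof -
  define S where "S = r + x\<^sup>2"
  have "S > 0"
    using r_pos by (simp add: S_def add_pos_nonneg)
  then have abs_deriv: "\<bar>deriv f x\<bar> = (r + 1) * \<bar>x\<bar> / S * f x"
    using r_pos f_pos[of x] by (simp add: deriv_f S_def abs_mult abs_divide)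
  show ?thesis
    unfolding gamma_ratio_def abs_deriv S_def[symmetric] using f_pos[of x] \<open>S > 0\<close>
    by (simp add: field_simps power2_eq_square)
qed

lemma F_tail_abs_le: "F x * (1 - F x) * \<bar>x\<bar> \<le> (r + x\<^sup>2) * f x / r"
proof -
  have nonneg_case: "F y * (1 - F y) * y \<le> (r + y\<^sup>2) * f y / r" if "y \<ge> 0" for y
  proof -
    have "F y * ((1 - F y) * y) \<le> 1 * ((r + y\<^sup>2) * f y / r)"
      using tail_pos[of y] F_pos[of y] mult_tail_le[of y] that
      by (intro mult_mono) (auto simp: mult.commute)
    then show ?thesis
      by (simp add: mult.assoc)
  qed
  show ?thesis
  proof (cases "x \<ge> 0")
    case True
    then show ?thesis
      using nonneg_case by simp
  next
    case False
    then show ?thesis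
      using nonneg_case[of "- x"] by (simp add: F_reflect f_even mult.commute)
  qed
qed

lemma gamma_ratio_le: "gamma_ratio x \<le> 1 + 1 / r"
proof -
  define S where "S = r + x\<^sup>2"
  have "S > 0"
    using r_pos by (simp add: S_def add_pos_nonneg)
  have "gamma_ratio x \<le> (r + 1) * (S * f x / r) / (S * f x)"
    unfolding gamma_ratio_eq S_def[symmetric] using F_tail_abs_le[of x] \<open>S > 0\<close> f_pos[of x] r_pos
    by (intro divide_right_mono mult_left_mono) (auto simp: S_def)
  also have "\<dots> = 1 + 1 / r"
    using \<open>S > 0\<close> f_pos[of x] r_pos by (simp add: field_simps)
  finally show ?thesis .
qed

lemma gamma_ratio_ge: "(1 + 1 / r) * F x * (x\<^sup>2 / (r + x\<^sup>2)) \<le> gamma_ratio x" if "x \<ge> 1"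
proof -
  define S where "S = r + x\<^sup>2"
  have "S > 0"
    using r_pos by (simp add: S_def add_pos_nonneg)
  have "(1 + 1 / r) * F x * (x\<^sup>2 / S) = (r + 1) * (F x * (x * f x / r) * x) / (S * f x)"
    using \<open>S > 0\<close> f_pos[of x] r_pos by (simp add: field_simps power2_eq_square)
  also have "\<dots> \<le> (r + 1) * (F x * (1 - F x) * \<bar>x\<bar>) / (S * f x)"
  proof -
    have "F x * (x * f x / r) * x \<le> F x * (1 - F x) * \<bar>x\<bar>"
      using mult_right_mono[OF mult_left_mono[OF tail_ge_mult_f[OF that] less_imp_le[OF F_pos[of x]]], of x] that
      by simp
    then show ?thesis
      using f_pos[of x] r_pos \<open>S > 0\<close> by (intro divide_right_mono mult_left_mono) auto
  qed
  finally show ?thesis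
    unfolding gamma_ratio_eq S_def .
qed

lemma gamma_functional_student_t:
  "bdd_above (range gamma_ratio) \<and> gamma_functional F f = 1 + 1 / r"
proof -
  have bdd: "bdd_above (range gamma_ratio)"
    using gamma_ratio_le by (rule bdd_aboveI2)
  have "(SUP x. gamma_ratio x) \<le> 1 + 1 / r"
    using gamma_ratio_le by (rule cSUP_least[OF UNIV_not_empty])
  moreover have "1 + 1 / r \<le> (SUP x. gamma_ratio x)"
  proof (rule tendsto_le[OF trivial_limit_at_top_linorder tendsto_const])
    show "((\<lambda>x. (1 + 1 / r) * F x * (x\<^sup>2 / (r + x\<^sup>2))) \<longlongrightarrow> 1 + 1 / r) at_top"
    proof -
      have "((\<lambda>x. x\<^sup>2 / (r + x\<^sup>2)) \<longlongrightarrow> 1) at_top"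
        using r_pos by real_asymp
      from tendsto_mult[OF tendsto_mult[OF tendsto_const tendsto_F_at_top] this]
      show ?thesis
        by simp
    qed
    show "\<forall>\<^sub>F x in at_top. (1 + 1 / r) * F x * (x\<^sup>2 / (r + x\<^sup>2)) \<le> (SUP x. gamma_ratio x)"
      using eventually_ge_at_top[of 1]
      by eventually_elim (use gamma_ratio_ge cSUP_upper[OF UNIV_I bdd] in \<open>blast intro: order_trans\<close>)
  qed
  ultimately show ?thesis
    using bdd by (simp add: gamma_functional_def gamma_ratio_def)
qed

end

theorem mainTheorem5:
  fixes r :: real
  assumes "r > 0"
  shows "convex_on UNIV (\<lambda>x. student_t_cdf r x powr (-1 / r)) \<and>
         convex_on UNIV (\<lambda>x. (1 - student_t_cdf r x) powr (-1 / r)) \<and>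
         bdd_above (range (\<lambda>x. student_t_cdf r x * (1 - student_t_cdf r x)
                   * \<bar>deriv (student_t_density r) x\<bar> / (student_t_density r x)\<^sup>2)) \<and>
         gamma_functional (student_t_cdf r) (student_t_density r) = 1 + 1 / r"
proof -
  interpret student_t r
    using assms by unfold_locales
  show ?thesis
    using convex_F_powr convex_tail_powr gamma_functional_student_t
    by (simp add: gamma_ratio_def[abs_def])
qed

end
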